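(* Let $n\ge2$, $1<\mathscr{P}\le n-1$, $N=\binom{n}{\mathscr{P}}$, let $0\le l<k\le N$ be integers and $p,q$ constants with $p=q-l$. Let $\varphi\in C^0(\mathbb{S}^n)$ be positive. Suppose that for $i=1,2$, $u_i$ is a positive admissible solution of $$\frac{\sigma_k(\Lambda(\nabla^2u_i+u_iI))}{\sigma_l(\Lambda(\nabla^2u_i+u_iI))}=u_i^{p-1}(u_i^2+|\nabla u_i|^2)^{\frac{k+1-q}{2}}\gamma_i\varphi\quad\text{on }\mathbb{S}^n,$$ where $\gamma_1,\gamma_2$ are constants. Then $\gamma_1=\gamma_2$.
   Context: $\mathbb{S}^n$ is the unit sphere with its standard metric; $\nabla u$, $\nabla^2u$ are the gradient and covariant Hessian in a local orthonormal frame; $I$ is the identity. Let $\mathbf{I}_1,\dots,\mathbf{I}_N$ enumerate the multi-indices $1\le i_1<\dots<i_{\mathscr{P}}\le n$. For a symmetric matrix $A$ with eigenvalues $\lambda$, $\Lambda(A)=(\Lambda_{\mathbf{I}_1},\dots,\Lambda_{\mathbf{I}_N})$ with $\Lambda_{\mathbf{I}}=\lambda_{i_1}+\dots+\lambda_{i_{\mathscr{P}}}$. $\sigma_m$ is the $m$-th elementary symmetric polynomial, $\sigma_0=1$; $\Gamma_k=\{\mu\in\mathbb{R}^N:\sigma_j(\mu)>0,\ 1\le j\le k\}$. A function $u\in C^2(\mathbb{S}^n)$ is admissible if $\Lambda(\nabla^2u+uI)\in\Gamma_k$ at every point. *)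

theory Defs
  imports "HOL-Analysis.Analysis"
begin

definition C2_on :: "'a::euclidean_space set \<Rightarrow> ('a \<Rightarrow> real) \<Rightarrow> bool" where
  "C2_on S f \<longleftrightarrow> open S \<and>
     (\<exists>f' :: 'a \<Rightarrow> ('a \<Rightarrow>\<^sub>L real). \<exists>f'' :: 'a \<Rightarrow> ('a \<Rightarrow>\<^sub>L ('a \<Rightarrow>\<^sub>L real)).
        (\<forall>x\<in>S. (f has_derivative blinfun_apply (f' x)) (at x)) \<and>
        (\<forall>x\<in>S. (f' has_derivative blinfun_apply (f'' x)) (at x)) \<and>
        continuous_on S f'')"

definition C2_sphere :: "('a::euclidean_space \<Rightarrow> real) \<Rightarrow> bool" where
  "C2_sphere u \<longleftrightarrow> (\<exists>S. open S \<and> sphere 0 1 \<subseteq> S \<and> C2_on S u)"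

definition sphere_exp :: "'a::euclidean_space \<Rightarrow> 'a \<Rightarrow> 'a" where
  "sphere_exp x v = cos (norm v) *\<^sub>R x + (sin (norm v) / norm v) *\<^sub>R v"

text \<open>Covariant derivative du(v) and covariant Hessian quadratic form (nabla^2 u)(v,v)
  at x, computed along the geodesic t \<mapsto> exp_x(t v).\<close>
definition sph_grad :: "('a::euclidean_space \<Rightarrow> real) \<Rightarrow> 'a \<Rightarrow> 'a \<Rightarrow> real" where
  "sph_grad u x v = deriv (\<lambda>t. u (sphere_exp x (t *\<^sub>R v))) 0"

definition sph_hess :: "('a::euclidean_space \<Rightarrow> real) \<Rightarrow> 'a \<Rightarrow> 'a \<Rightarrow> real" where
  "sph_hess u x v = deriv (deriv (\<lambda>t. u (sphere_exp x (t *\<^sub>R v)))) 0"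

text \<open>e_0..e_{n-1} orthonormal and orthogonal to x (an orthonormal frame of T_x S^n when DIM = n+1).\<close>
definition tframe :: "nat \<Rightarrow> 'a::euclidean_space \<Rightarrow> (nat \<Rightarrow> 'a) \<Rightarrow> bool" where
  "tframe n x e \<longleftrightarrow> (\<forall>i<n. \<forall>j<n. e i \<bullet> e j = (if i = j then 1 else 0)) \<and> (\<forall>i<n. e i \<bullet> x = 0)"

text \<open>e is an orthonormal frame at x diagonalising nabla^2 u + u I, with eigenvalues lam.\<close>
definition eig_frame :: "nat \<Rightarrow> ('a::euclidean_space \<Rightarrow> real) \<Rightarrow> 'a \<Rightarrow> (nat \<Rightarrow> 'a) \<Rightarrow> (nat \<Rightarrow> real) \<Rightarrow> bool" where
  "eig_frame n u x e lam \<longleftrightarrow> tframe n x e \<and>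
     (\<forall>c :: nat \<Rightarrow> real. sph_hess u x (\<Sum>i<n. c i *\<^sub>R e i) + u x * (\<Sum>i<n. (c i)\<^sup>2)
                          = (\<Sum>i<n. lam i * (c i)\<^sup>2))"

definition Idx :: "nat \<Rightarrow> nat \<Rightarrow> nat set set" where
  "Idx n P = {I. I \<subseteq> {..<n} \<and> card I = P}"

definition Lam :: "(nat \<Rightarrow> real) \<Rightarrow> nat set \<Rightarrow> real" where
  "Lam lam I = (\<Sum>i\<in>I. lam i)"

definition esym :: "nat \<Rightarrow> 'b set \<Rightarrow> ('b \<Rightarrow> real) \<Rightarrow> real" where
  "esym m A mu = (\<Sum>J\<in>{J. J \<subseteq> A \<and> card J = m}. \<Prod>j\<in>J. mu j)"

definition in_Gamma :: "nat \<Rightarrow> 'b set \<Rightarrow> ('b \<Rightarrow> real) \<Rightarrow> bool" where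
  "in_Gamma k A mu \<longleftrightarrow> (\<forall>j. 1 \<le> j \<and> j \<le> k \<longrightarrow> esym j A mu > 0)"

definition admissible :: "nat \<Rightarrow> nat \<Rightarrow> nat \<Rightarrow> ('a::euclidean_space \<Rightarrow> real) \<Rightarrow> bool" where
  "admissible n P k u \<longleftrightarrow> C2_sphere u \<and>
     (\<forall>x\<in>sphere 0 1. \<forall>e lam. eig_frame n u x e lam \<longrightarrow> in_Gamma k (Idx n P) (Lam lam))"

definition solves :: "nat \<Rightarrow> nat \<Rightarrow> nat \<Rightarrow> nat \<Rightarrow> real \<Rightarrow> real \<Rightarrow> real \<Rightarrow> ('a::euclidean_space \<Rightarrow> real)
                      \<Rightarrow> ('a \<Rightarrow> real) \<Rightarrow> bool" where
  "solves n P k l p q \<gamma> \<phi> u \<longleftrightarrow>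
     (\<forall>x\<in>sphere 0 1. \<forall>e lam. eig_frame n u x e lam \<longrightarrow>
        esym k (Idx n P) (Lam lam) / esym l (Idx n P) (Lam lam)
        = u x powr (p - 1) * ((u x)\<^sup>2 + (\<Sum>i<n. (sph_grad u x (e i))\<^sup>2)) powr ((real k + 1 - q) / 2)
          * \<gamma> * \<phi> x)"

end

theory Submission
  imports Defs "HOL-Computational_Algebra.Polynomial"
begin

text \<open>Let \<open>x\<^sub>0\<close> maximise \<open>u\<^sub>1 / u\<^sub>2\<close> on the sphere and \<open>M = u\<^sub>1(x\<^sub>0) / u\<^sub>2(x\<^sub>0)\<close>, so that
  \<open>u\<^sub>1 \<le> M u\<^sub>2\<close> with equality at \<open>x\<^sub>0\<close>. There \<open>\<nabla>u\<^sub>1 = M \<nabla>u\<^sub>2\<close> and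
  \<open>\<nabla>\<^sup>2u\<^sub>1 \<le> M \<nabla>\<^sup>2u\<^sub>2\<close> on the tangent space, so by Courant--Fischer every ordered eigenvalue of
  \<open>\<nabla>\<^sup>2u\<^sub>1 + u\<^sub>1 I\<close> is at most \<open>M\<close> times the corresponding one of \<open>\<nabla>\<^sup>2u\<^sub>2 + u\<^sub>2 I\<close>,
  and the same holds for the sums \<open>\<Lambda>\<^sub>I\<close>. By Newton's inequalities \<open>\<sigma>\<^sub>k / \<sigma>\<^sub>l\<close> is
  monotone on \<open>\<Gamma>\<^sub>k\<close>; it is homogeneous of degree \<open>k - l\<close>. Hence at \<open>x\<^sub>0\<close> the left-hand side
  of the equation for \<open>u\<^sub>1\<close> is at most \<open>M\<^sup>k\<^sup>-\<^sup>l\<close> times that for \<open>u\<^sub>2\<close>, while the right-hand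
  sides differ exactly by the factor \<open>M\<^sup>p\<^sup>-\<^sup>1\<^sup>+\<^sup>k\<^sup>+\<^sup>1\<^sup>-\<^sup>q \<gamma>\<^sub>1 / \<gamma>\<^sub>2 = M\<^sup>k\<^sup>-\<^sup>l \<gamma>\<^sub>1 / \<gamma>\<^sub>2\<close>
  because \<open>p = q - l\<close>. So \<open>\<gamma>\<^sub>1 \<le> \<gamma>\<^sub>2\<close>, and by symmetry \<open>\<gamma>\<^sub>1 = \<gamma>\<^sub>2\<close>.\<close>

section \<open>Elementary symmetric functions\<close>

lemma esym_0: "finite A \<Longrightarrow> esym 0 A x = 1"
proof -
  assume "finite A"
  then have "{J. J \<subseteq> A \<and> card J = 0} = {{}}"
    by (auto simp: card_eq_0_iff dest: finite_subset)
  then show ?thesis by (simp add: esym_def)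
qed

lemma subsets_card_Suc_insert:
  assumes "finite A" "a \<notin> A"
  shows "{J. J \<subseteq> insert a A \<and> card J = Suc m} =
     {J. J \<subseteq> A \<and> card J = Suc m} \<union> insert a ` {J. J \<subseteq> A \<and> card J = m}"
proof (intro equalityI subsetI)
  fix J assume J: "J \<in> {J. J \<subseteq> insert a A \<and> card J = Suc m}"
  show "J \<in> {J. J \<subseteq> A \<and> card J = Suc m} \<union> insert a ` {J. J \<subseteq> A \<and> card J = m}"
  proof (cases "a \<in> J")
    case True
    have "finite J" using J assms by (auto intro: finite_subset)
    then have "J - {a} \<in> {J. J \<subseteq> A \<and> card J = m}" using J True by auto
    moreover have "J = insert a (J - {a})" using True by auto
    ultimately show ?thesis by blast
  qed (use J in auto)
next
  fix J assume J: "J \<in> {J. J \<subseteq> A \<and> card J = Suc m} \<union> insert a ` {J. J \<subseteq> A \<and> card J = m}"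
  show "J \<in> {J. J \<subseteq> insert a A \<and> card J = Suc m}"
  proof (cases "J \<subseteq> A \<and> card J = Suc m")
    case False
    then obtain K where K: "K \<subseteq> A" "card K = m" "J = insert a K" using J by auto
    moreover have "finite K" "a \<notin> K" using K assms finite_subset by blast+
    ultimately show ?thesis using assms by auto
  qed auto
qed

lemma esym_Suc_insert:
  assumes "finite A" "a \<notin> A"
  shows "esym (Suc m) (insert a A) x = x a * esym m A x + esym (Suc m) A x"
proof -
  let ?S = "{J. J \<subseteq> A \<and> card J = Suc m}" and ?T = "{J. J \<subseteq> A \<and> card J = m}"
  have "esym (Suc m) (insert a A) x = (\<Sum>J\<in>?S. \<Prod>j\<in>J. x j) + (\<Sum>J\<in>insert a ` ?T. \<Prod>j\<in>J. x j)"
    unfolding esym_def subsets_card_Suc_insert[OF assms]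
    by (rule sum.union_disjoint) (use assms in auto)
  also have "(\<Sum>J\<in>insert a ` ?T. \<Prod>j\<in>J. x j) = (\<Sum>J\<in>?T. \<Prod>j\<in>insert a J. x j)"
    by (rule sum.reindex[unfolded comp_def]) (use assms in \<open>auto simp: inj_on_def\<close>)
  also have "\<dots> = (\<Sum>J\<in>?T. x a * (\<Prod>j\<in>J. x j))"
  proof (intro sum.cong refl)
    fix J assume "J \<in> ?T"
    then have "finite J" "a \<notin> J" using assms by (auto intro: finite_subset)
    then show "(\<Prod>j\<in>insert a J. x j) = x a * (\<Prod>j\<in>J. x j)" by simp
  qed
  finally show ?thesis by (simp add: esym_def sum_distrib_left)
qed

lemma esym_Suc_remove:
  assumes "finite A" "j \<in> A"
  shows "esym (Suc m) A x = x j * esym m (A - {j}) x + esym (Suc m) (A - {j}) x"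
  using esym_Suc_insert[of "A - {j}" j m x] assms by (simp add: insert_absorb)

lemma esym_eq_0_if_card_less: "finite A \<Longrightarrow> card A < m \<Longrightarrow> esym m A x = 0"
proof -
  assume "finite A" "card A < m"
  then have "\<forall>J. J \<subseteq> A \<longrightarrow> card J \<le> card A" using card_mono by blast
  then have E: "{J. J \<subseteq> A \<and> card J = m} = {}"
    using \<open>card A < m\<close> by (auto simp: not_le[symmetric])
  show ?thesis unfolding esym_def E by simp
qed

lemma esym_card: "finite A \<Longrightarrow> esym (card A) A x = (\<Prod>a\<in>A. x a)"
proof -
  assume "finite A"
  then have "{J. J \<subseteq> A \<and> card J = card A} = {A}"
    using card_subset_eq by auto
  then show ?thesis by (simp add: esym_def)
qed

lemma esym_1: "finite A \<Longrightarrow> esym 1 A x = (\<Sum>a\<in>A. x a)"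
proof (induction A rule: finite_induct)
  case (insert a A)
  then show ?case using esym_Suc_insert[OF insert(1,2), of 0 x] by (simp add: esym_0)
qed (simp add: esym_def)

lemma esym_scale: "esym m A (\<lambda>a. c * x a) = c ^ m * esym m A x"
  unfolding esym_def sum_distrib_left by (intro sum.cong refl) (simp add: prod.distrib)

lemma esym_cong: "(\<And>a. a \<in> A \<Longrightarrow> x a = y a) \<Longrightarrow> esym m A x = esym m A y"
  unfolding esym_def by (intro sum.cong refl prod.cong) auto

lemma esym_complement:
  fixes z :: "'b \<Rightarrow> real"
  assumes "finite Y" "\<forall>y\<in>Y. z y \<noteq> 0" "j \<le> card Y"
  shows "esym (card Y - j) Y z = (\<Prod>y\<in>Y. z y) * esym j Y (\<lambda>y. 1 / z y)"
proof -
  let ?T = "{J. J \<subseteq> Y \<and> card J = j}"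
  have fin: "J \<subseteq> Y \<Longrightarrow> finite J" for J using assms(1) finite_subset by blast
  have "esym (card Y - j) Y z = (\<Sum>J\<in>?T. \<Prod>y\<in>Y - J. z y)"
    unfolding esym_def
    by (rule sum.reindex_bij_witness[where i="\<lambda>J. Y - J" and j="\<lambda>J. Y - J"])
       (use assms fin in \<open>auto simp: card_Diff_subset Diff_Diff_Int Int_absorb1\<close>)
  also have "\<dots> = (\<Sum>J\<in>?T. (\<Prod>y\<in>Y. z y) * (\<Prod>y\<in>J. 1 / z y))"
  proof (intro sum.cong refl)
    fix J assume J: "J \<in> ?T"
    have "(\<Prod>y\<in>J. z y) * (\<Prod>y\<in>J. 1 / z y) = (\<Prod>y\<in>J. z y * (1 / z y))"
      by (rule prod.distrib[symmetric])
    also have "\<dots> = 1" using J assms(2) by (intro prod.neutral) auto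
    finally have "(\<Prod>y\<in>J. z y) * (\<Prod>y\<in>J. 1 / z y) = 1" .
    moreover have "(\<Prod>y\<in>Y. z y) = (\<Prod>y\<in>Y - J. z y) * (\<Prod>y\<in>J. z y)"
      using J assms(1) by (simp add: prod.subset_diff)
    ultimately show "(\<Prod>y\<in>Y - J. z y) = (\<Prod>y\<in>Y. z y) * (\<Prod>y\<in>J. 1 / z y)"
      by (metis mult.assoc mult_1_right)
  qed
  finally show ?thesis by (simp add: esym_def sum_distrib_left)
qed

lemma square_sum_eq_esym_2:
  fixes w :: "'b \<Rightarrow> real"
  assumes "finite Y"
  shows "(\<Sum>y\<in>Y. w y)\<^sup>2 = (\<Sum>y\<in>Y. (w y)\<^sup>2) + 2 * esym 2 Y w"
  using assms
proof (induction Y rule: finite_induct)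
  case empty then show ?case by (simp add: esym_eq_0_if_card_less)
next
  case (insert a Y)
  have "esym 2 (insert a Y) w = w a * (\<Sum>y\<in>Y. w y) + esym 2 Y w"
    using esym_Suc_insert[OF insert(1,2), of 1 w] esym_1[OF insert(1), of w]
    by (simp add: numeral_2_eq_2)
  then show ?case using insert by (simp add: power2_eq_square algebra_simps)
qed

lemma coeff_prod_linear:
  fixes x :: "'b \<Rightarrow> real"
  assumes "finite A"
  shows "coeff (\<Prod>a\<in>A. [:x a, 1:]) j = (if j \<le> card A then esym (card A - j) A x else 0)"
  using assms
proof (induction A arbitrary: j rule: finite_induct)
  case empty
  then show ?case by (simp add: esym_0)
next
  case (insert a A)
  let ?q = "\<Prod>a\<in>A. [:x a, 1:]"
  have "(\<Prod>a\<in>insert a A. [:x a, 1:]) = smult (x a) ?q + pCons 0 ?q"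
    using insert by simp
  then have c: "coeff (\<Prod>a\<in>insert a A. [:x a, 1:]) j =
      x a * coeff ?q j + (if j = 0 then 0 else coeff ?q (j - 1))"
    by (simp add: coeff_pCons split: nat.split)
  have card: "card (insert a A) = Suc (card A)" using insert by simp
  consider "j = 0" | i where "j = Suc i" "i < card A" | "j = Suc (card A)"
    | i where "j = Suc i" "card A < i"
    by (metis linorder_neqE_nat not0_implies_Suc)
  then show ?case
  proof cases
    case 1
    then show ?thesis using c card insert esym_Suc_insert[OF insert(1,2), of "card A" x]
      esym_eq_0_if_card_less[OF insert(1), of "Suc (card A)" x] by simp
  next
    case (2 i)
    then have "card A - i = Suc (card A - Suc i)" by simp
    then show ?thesis using c card 2 insert esym_Suc_insert[OF insert(1,2), of "card A - Suc i" x]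
      by simp
  qed (use c card insert in \<open>simp_all add: esym_0\<close>)
qed

section \<open>Newton's inequality\<close>

lemma coeff_higher_pderiv:
  fixes p :: "real poly"
  shows "coeff ((pderiv ^^ r) p) i = coeff p (i + r) * (fact (i + r) / fact i)"
proof (induction r arbitrary: i)
  case (Suc r)
  have "coeff ((pderiv ^^ Suc r) p) i = of_nat (Suc i) * coeff ((pderiv ^^ r) p) (Suc i)"
    by (simp add: coeff_pderiv)
  also have "\<dots> = coeff p (i + Suc r) * (of_nat (Suc i) * fact (i + Suc r) / fact (Suc i))"
    using Suc by simp
  also have "of_nat (Suc i) * fact (i + Suc r) / fact (Suc i) = (fact (i + Suc r) / fact i :: real)"
    unfolding fact_Suc[of i] by (simp del: of_nat_Suc)
  finally show ?case .
qed simp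

lemma degree_higher_pderiv:
  fixes p :: "real poly"
  shows "degree ((pderiv ^^ r) p) = degree p - r"
  by (induction r) (simp_all add: degree_pderiv)

lemma poly_eq_smult_prod_roots:
  fixes p :: "real poly"
  assumes "p \<noteq> 0" "finite R" "card R = degree p" "\<forall>r\<in>R. poly p r = 0"
  shows "p = smult (lead_coeff p) (\<Prod>r\<in>R. [:-r, 1:])"
proof -
  have "(\<Prod>r\<in>R. [:-r, 1:]) dvd p"
    using assms(2,4)
  proof (induction R rule: finite_induct)
    case (insert a R)
    then obtain q where q: "p = (\<Prod>r\<in>R. [:-r, 1:]) * q" by (auto elim: dvdE)
    have "poly (\<Prod>r\<in>R. [:-r, 1:]) a \<noteq> 0"
      using insert by (auto simp: poly_prod)
    moreover have "poly p a = 0" using insert by simp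
    ultimately have "poly q a = 0" using q by simp
    then obtain q' where q': "q = [:-a, 1:] * q'" by (auto simp: poly_eq_0_iff_dvd elim: dvdE)
    have e2: "(\<Prod>r\<in>insert a R. [:-r, 1:]) = [:-a, 1:] * (\<Prod>r\<in>R. [:-r, 1:])"
      using insert by simp
    have "p = (\<Prod>r\<in>insert a R. [:-r, 1:]) * q'" unfolding q q' e2 by (simp only: mult_ac)
    then show ?case by simp
  qed simp
  then obtain q where q: "p = (\<Prod>r\<in>R. [:-r, 1:]) * q" by (auto elim: dvdE)
  have nz: "(\<Prod>r\<in>R. [:-r, 1:]) \<noteq> (0::real poly)" by (simp add: prod_zero_iff assms(2))
  have qnz: "q \<noteq> 0" using q assms(1) by auto
  have dP: "degree (\<Prod>r\<in>R. [:-r, 1:]) = card R"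
    by (subst degree_prod_eq_sum_degree) auto
  have "degree p = card R + degree q" using q nz qnz by (simp add: degree_mult_eq dP)
  then have "degree q = 0" using assms(3) by simp
  then obtain c where c: "q = [:c:]" by (meson degree_eq_zeroE)
  have lP: "lead_coeff (\<Prod>r\<in>R. [:-r, 1:]) = (1::real)" by (simp add: lead_coeff_prod)
  have "lead_coeff p = lead_coeff (\<Prod>r\<in>R. [:-r, 1:]) * lead_coeff q"
    using q by (simp only: lead_coeff_mult)
  then have l: "lead_coeff p = c" using lP c by simp
  have ps: "p = smult c (\<Prod>r\<in>R. [:-r, 1:])" using q c by simp
  show ?thesis by (subst l) (rule ps)
qed

text \<open>Rolle's theorem between consecutive roots.\<close>

lemma card_roots_pderiv:
  fixes p :: "real poly"
  assumes "finite R" "card R = Suc d" "\<forall>r\<in>R. poly p r = 0"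
  shows "\<exists>R'. finite R' \<and> card R' = d \<and> (\<forall>y\<in>R'. poly (pderiv p) y = 0)"
proof -
  define xs where "xs = sorted_list_of_set R"
  have len: "length xs = Suc d" using assms by (simp add: xs_def)
  have lt: "\<And>i j. i < j \<Longrightarrow> j < Suc d \<Longrightarrow> xs ! i < xs ! j"
    using strict_sorted_list_of_set[of R] len by (auto simp: xs_def sorted_wrt_iff_nth_less)
  have root: "\<And>i. i < Suc d \<Longrightarrow> poly p (xs ! i) = 0"
    using len assms by (metis nth_mem set_sorted_list_of_set xs_def)
  have "\<exists>z. xs ! i < z \<and> z < xs ! Suc i \<and> poly (pderiv p) z = 0" if i: "i < d" for i
  proof -
    have "poly p (xs ! i) = poly p (xs ! Suc i)" using root i by simp
    moreover have "continuous_on {xs ! i..xs ! Suc i} (poly p)" by (intro continuous_intros)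
    moreover have "poly p differentiable (at y)" for y
      using poly_DERIV real_differentiable_def by blast
    ultimately obtain z where "xs ! i < z" "z < xs ! Suc i" "DERIV (poly p) z :> 0"
      using Rolle[OF lt[OF lessI Suc_mono[OF i]]] by blast
    then show ?thesis using DERIV_unique[OF poly_DERIV] by blast
  qed
  then obtain z where z: "\<And>i. i < d \<Longrightarrow> xs ! i < z i \<and> z i < xs ! Suc i \<and> poly (pderiv p) (z i) = 0"
    by metis
  have "z i < z j" if "i < j" "j < d" for i j
  proof -
    have "xs ! Suc i \<le> xs ! j" using lt[of "Suc i" j] that by (cases "Suc i = j") auto
    then show ?thesis using z[of i] z[of j] that by simp
  qed
  then have "inj_on z {..<d}" by (metis inj_onI lessThan_iff linorder_neqE_nat order_less_irrefl)
  then show ?thesis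
    by (intro exI[of _ "z ` {..<d}"]) (use z in \<open>auto simp: card_image\<close>)
qed

lemma card_roots_higher_pderiv:
  fixes p :: "real poly"
  assumes "finite R" "card R = d" "\<forall>r\<in>R. poly p r = 0" "r \<le> d"
  shows "\<exists>R'. finite R' \<and> card R' = d - r \<and> (\<forall>y\<in>R'. poly ((pderiv ^^ r) p) y = 0)"
  using assms(4)
proof (induction r)
  case (Suc r)
  then obtain R' where "finite R'" "card R' = Suc (d - Suc r)" "\<forall>y\<in>R'. poly ((pderiv ^^ r) p) y = 0"
    by (metis Suc_diff_Suc Suc_le_lessD less_or_eq_imp_le)
  from card_roots_pderiv[OF this] show ?case by simp
qed (use assms in auto)

text \<open>The case of a family of maximal degree: with \<open>w = 1 / z\<close>, the claim reads
  \<open>2 K \<sigma>\<^sub>2(w) \<le> (K - 1) (\<Sum>w)\<^sup>2\<close>, i.e. Cauchy--Schwarz \<open>(\<Sum>w)\<^sup>2 \<le> K \<Sum>w\<^sup>2\<close>.\<close>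

lemma newton_inequality_top:
  fixes z :: "'b \<Rightarrow> real"
  assumes "finite Y" "card Y = K" "2 \<le> K"
  shows "2 * real K * esym (K - 2) Y z * esym K Y z \<le> (real K - 1) * (esym (K - 1) Y z)\<^sup>2"
proof (cases "\<exists>y\<in>Y. z y = 0")
  case True
  then have "esym K Y z = 0" using esym_card[OF assms(1), of z] assms by (simp add: prod_zero_iff)
  then show ?thesis using assms by simp
next
  case False
  define w where "w = (\<lambda>y. 1 / z y)"
  define \<pi> where "\<pi> = (\<Prod>y\<in>Y. z y)"
  define S where "S = (\<Sum>y\<in>Y. w y)"
  have e: "esym (K - j) Y z = \<pi> * esym j Y w" if "j \<le> K" for j
    using esym_complement[of Y z j] assms False that by (simp add: \<pi>_def w_def)
  have eK: "esym K Y z = \<pi>" and eK1: "esym (K - 1) Y z = \<pi> * S"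
    using e[of 0] e[of 1] assms esym_1[OF assms(1), of w] by (simp_all add: esym_0 S_def)
  have "S\<^sup>2 \<le> (\<Sum>y\<in>Y. (w y)\<^sup>2) * real K"
    using sum_squared_le_sum_of_squares[of w Y] assms by (simp add: S_def)
  then have key: "2 * real K * esym 2 Y w \<le> (real K - 1) * S\<^sup>2"
    using square_sum_eq_esym_2[OF assms(1), of w] by (simp add: S_def algebra_simps)
  have "2 * real K * esym (K - 2) Y z * esym K Y z = \<pi>\<^sup>2 * (2 * real K * esym 2 Y w)"
    using e[of 2] assms by (simp add: eK power2_eq_square algebra_simps)
  also have "\<dots> \<le> \<pi>\<^sup>2 * ((real K - 1) * S\<^sup>2)"
    by (rule mult_left_mono[OF key]) simp
  also have "\<dots> = (real K - 1) * (esym (K - 1) Y z)\<^sup>2"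
    unfolding eK1 by (simp add: power2_eq_square algebra_simps)
  finally show ?thesis .
qed

text \<open>By Rolle's theorem, differentiating \<open>\<Prod>(X + x\<^sub>a)\<close> down to degree \<open>m\<close> leaves a
  polynomial with \<open>m\<close> real roots, whose coefficients are fixed multiples of the
  \<open>\<sigma>\<^sub>j(x)\<close>.\<close>

lemma higher_pderiv_prod_linear_roots:
  fixes x :: "'b \<Rightarrow> real"
  assumes A: "finite A" "inj_on x A" "m \<le> card A"
  obtains R L where "finite R" "card R = m"
    "\<And>i. i \<le> m \<Longrightarrow> L * esym (m - i) R uminus = esym (m - i) A x * (fact (i + (card A - m)) / fact i)"
proof -
  define N where "N = card A"
  define r where "r = N - m"
  define P where "P = (\<Prod>a\<in>A. [:x a, 1:])"
  define Q where "Q = (pderiv ^^ r) P"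
  have mN: "m \<le> N" using A(3) N_def by simp
  have cP: "\<And>j. coeff P j = (if j \<le> N then esym (N - j) A x else 0)"
    unfolding P_def N_def by (rule coeff_prod_linear[OF A(1)])
  have degP: "degree P = N"
    by (intro antisym degree_le le_degree) (simp_all add: cP esym_0[OF A(1)])
  define R where "R = (\<lambda>a. - x a) ` A"
  have "inj_on (\<lambda>a. - x a) A" using A(2) by (auto simp: inj_on_def)
  then have fR: "finite R" and cR: "card R = N"
    using A(1) by (auto simp: R_def N_def card_image)
  have "\<forall>y\<in>R. poly P y = 0"
    unfolding R_def P_def poly_prod using A(1) by (auto simp: prod_zero_iff)
  moreover have "r \<le> N" by (simp add: r_def)
  ultimately obtain R' where R': "finite R'" "card R' = m" "\<forall>y\<in>R'. poly Q y = 0"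
    using card_roots_higher_pderiv[OF fR cR] mN unfolding Q_def by (metis r_def diff_diff_cancel)
  have cQ: "\<And>i. coeff Q i = coeff P (i + r) * (fact (i + r) / fact i)"
    unfolding Q_def by (rule coeff_higher_pderiv)
  have "coeff Q m \<noteq> 0" using mN by (simp add: cQ cP r_def esym_0[OF A(1)])
  then have "Q \<noteq> 0" by auto
  moreover have "degree Q = m" unfolding Q_def degree_higher_pderiv degP using mN by (simp add: r_def)
  ultimately have Q: "Q = smult (lead_coeff Q) (\<Prod>y\<in>R'. [:-y, 1:])"
    using poly_eq_smult_prod_roots[OF _ R'(1) _ R'(3)] R'(2) by simp
  show ?thesis
  proof (rule that[OF R'(1,2)])
    fix i assume i: "i \<le> m"
    have "coeff Q i = lead_coeff Q * esym (m - i) R' uminus"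
      using i coeff_prod_linear[OF R'(1), of uminus] R'(2) by (subst Q) simp
    moreover have "coeff Q i = esym (m - i) A x * (fact (i + r) / fact i)"
      using i mN by (simp add: cQ cP r_def)
    ultimately show "lead_coeff Q * esym (m - i) R' uminus = esym (m - i) A x * (fact (i + (card A - m)) / fact i)"
      by (simp add: r_def N_def)
  qed
qed

lemma le_square_if_weighted_le:
  fixes a b c m r :: real
  assumes h: "(m + 1) * (r + 2) * (a * c) \<le> m * (r + 1) * b\<^sup>2" and m: "m > 0" and r: "r \<ge> 0"
  shows "a * c \<le> b\<^sup>2"
proof (cases "a * c \<le> 0")
  case False
  have "m * (r + 1) \<le> (m + 1) * (r + 2)" using m r by (intro mult_mono) auto
  then have "m * (r + 1) * (a * c) \<le> (m + 1) * (r + 2) * (a * c)"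
    using False by (intro mult_right_mono) auto
  also have "\<dots> \<le> m * (r + 1) * b\<^sup>2" by (rule h)
  finally have "m * (r + 1) * (a * c) \<le> m * (r + 1) * b\<^sup>2" .
  moreover have "m * (r + 1) > 0" using m r by simp
  ultimately show ?thesis by (rule mult_left_le_imp_le)
qed (use zero_le_power2[of b] in linarith)

lemma newton_inequality_inj:
  fixes x :: "'b \<Rightarrow> real"
  assumes A: "finite A" "inj_on x A" "1 \<le> m"
  shows "esym (m - 1) A x * esym (m + 1) A x \<le> (esym m A x)\<^sup>2"
proof (cases "card A < m + 1")
  case True
  then show ?thesis using esym_eq_0_if_card_less[OF A(1)] by simp
next
  case False
  then obtain R L where R: "finite R" "card R = m + 1" and cc:
    "\<And>i. i \<le> m + 1 \<Longrightarrow> L * esym (m + 1 - i) R uminus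
       = esym (m + 1 - i) A x * (fact (i + (card A - (m + 1))) / fact i)"
    using higher_pderiv_prod_linear_roots[OF A(1,2), of "m + 1"] by auto
  define a where "a = esym (m - 1) A x"
  define b where "b = esym m A x"
  define c where "c = esym (m + 1) A x"
  define r where "r = card A - (m + 1)"
  define F where "F = (fact r :: real)"
  define rr where "rr = real r"
  define mm where "mm = real m"
  have c0: "L * esym (m + 1) R uminus = c * F"
    using cc[of 0] by (simp add: c_def F_def r_def)
  have c1: "L * esym m R uminus = b * ((rr + 1) * F)"
    using cc[of 1] by (simp add: b_def F_def rr_def r_def)
  have c2: "L * esym (m - 1) R uminus = a * ((rr + 2) * (rr + 1) * F / 2)"
  proof -
    have "m + 1 - 2 = m - 1" by simp
    then have "L * esym (m - 1) R uminus = a * (fact (2 + r) / fact 2)"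
      using cc[of 2] A(3) by (simp add: a_def r_def)
    moreover have "fact (2 + r) = (rr + 2) * (rr + 1) * F"
      by (simp add: F_def rr_def numeral_2_eq_2 algebra_simps)
    ultimately show ?thesis by simp
  qed
  have "m + 1 - 2 = m - 1" "m + 1 - 1 = m" by simp_all
  then have "2 * (mm + 1) * esym (m - 1) R uminus * esym (m + 1) R uminus \<le> mm * (esym m R uminus)\<^sup>2"
    using newton_inequality_top[OF R, of uminus] A(3) by (simp add: mm_def algebra_simps)
  then have "L\<^sup>2 * (2 * (mm + 1) * esym (m - 1) R uminus * esym (m + 1) R uminus)
      \<le> L\<^sup>2 * (mm * (esym m R uminus)\<^sup>2)"
    by (rule mult_left_mono) simp
  then have "2 * (mm + 1) * (L * esym (m - 1) R uminus) * (L * esym (m + 1) R uminus)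
      \<le> mm * (L * esym m R uminus)\<^sup>2"
    by (simp add: power2_eq_square algebra_simps)
  then have "((rr + 1) * F\<^sup>2) * ((mm + 1) * (rr + 2) * (a * c)) \<le> ((rr + 1) * F\<^sup>2) * (mm * (rr + 1) * b\<^sup>2)"
    unfolding c0 c1 c2 by (simp add: power2_eq_square algebra_simps)
  moreover have "(rr + 1) * F\<^sup>2 > 0" by (simp add: F_def rr_def)
  ultimately have "(mm + 1) * (rr + 2) * (a * c) \<le> mm * (rr + 1) * b\<^sup>2"
    by (rule mult_left_le_imp_le)
  then have "a * c \<le> b\<^sup>2"
    by (rule le_square_if_weighted_le) (use A(3) in \<open>simp_all add: mm_def rr_def\<close>)
  then show ?thesis by (simp add: a_def b_def c_def)
qed

lemma eventually_at_right_neq: "\<forall>\<^sub>F e in at_right (0::real). e \<noteq> c"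
  unfolding eventually_at_right_field by (rule exI[of _ "if c \<le> 0 then 1 else c"]) auto

text \<open>The general case follows by perturbing \<open>x\<close> to an injective family and passing to the limit.\<close>

lemma newton_inequality:
  fixes x :: "'b \<Rightarrow> real"
  assumes A: "finite A" "1 \<le> m"
  shows "esym (m - 1) A x * esym (m + 1) A x \<le> (esym m A x)\<^sup>2"
proof -
  obtain d :: "'b \<Rightarrow> nat" where d: "inj_on d A"
    using finite_imp_inj_to_nat_seg[OF A(1)] by blast
  define y where "y = (\<lambda>e a. x a + e * real (d a))"
  define g where "g = (\<lambda>e. (esym m A (y e))\<^sup>2 - esym (m - 1) A (y e) * esym (m + 1) A (y e))"
  have "\<forall>\<^sub>F e in at_right 0. a \<noteq> b \<longrightarrow> y e a \<noteq> y e b" if "a \<in> A" "b \<in> A" for a b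
  proof (cases "a = b")
    case False
    then have "real (d a) \<noteq> real (d b)" using d that by (auto simp: inj_on_def)
    then have "a \<noteq> b \<longrightarrow> y e a \<noteq> y e b"
      if "e \<noteq> (x b - x a) / (real (d a) - real (d b))" for e
      using that by (auto simp: y_def field_simps)
    then show ?thesis by (rule eventually_mono[OF eventually_at_right_neq])
  qed simp
  then have "\<forall>\<^sub>F e in at_right 0. \<forall>a\<in>A. \<forall>b\<in>A. a \<noteq> b \<longrightarrow> y e a \<noteq> y e b"
    by (simp add: eventually_ball_finite_distrib A(1))
  then have ev: "\<forall>\<^sub>F e in at_right 0. 0 \<le> g e"
  proof (rule eventually_mono)
    fix e assume "\<forall>a\<in>A. \<forall>b\<in>A. a \<noteq> b \<longrightarrow> y e a \<noteq> y e b"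
    then have "inj_on (y e) A" by (auto simp: inj_on_def)
    from newton_inequality_inj[OF A(1) this A(2)] show "0 \<le> g e" by (simp add: g_def)
  qed
  have "isCont g 0" unfolding g_def y_def esym_def by (intro continuous_intros)
  then have "(g \<longlongrightarrow> g 0) (at_right 0)"
    unfolding isCont_def by (rule tendsto_within_subset) simp
  then have "0 \<le> g 0" using ev by (rule tendsto_lowerbound) simp
  moreover have "y 0 = x" by (simp add: y_def fun_eq_iff)
  ultimately show ?thesis by (simp add: g_def)
qed

section \<open>The cone \<open>\<Gamma>\<^sub>k\<close>\<close>

lemma in_Gamma_esym_pos: "finite A \<Longrightarrow> in_Gamma k A mu \<Longrightarrow> j \<le> k \<Longrightarrow> esym j A mu > 0"
  by (cases j) (auto simp: esym_0 in_Gamma_def)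

lemma in_Gamma_remove:
  fixes mu :: "'b \<Rightarrow> real"
  assumes "finite A" "i \<in> A" "in_Gamma k A mu"
  shows "in_Gamma (k - 1) (A - {i}) mu"
  using assms(3)
proof (induction k)
  case (Suc k)
  have IH: "in_Gamma (k - 1) (A - {i}) mu"
    using Suc by (auto simp: in_Gamma_def)
  show ?case
  proof (cases k)
    case (Suc t)
    let ?L = "A - {i}"
    define a where "a = esym t ?L mu"
    define b where "b = esym (Suc t) ?L mu"
    define c where "c = esym (Suc (Suc t)) ?L mu"
    have apos: "a > 0" unfolding a_def using in_Gamma_esym_pos[OF _ IH] assms Suc by simp
    have "esym (Suc t) A mu > 0" "esym (Suc (Suc t)) A mu > 0"
      using Suc.prems Suc by (auto simp: in_Gamma_def)
    then have s1: "mu i * a + b > 0" and s2: "mu i * b + c > 0"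
      using esym_Suc_remove[OF assms(1,2), of _ mu] by (simp_all add: a_def b_def c_def)
    have newton: "a * c \<le> b\<^sup>2"
      using newton_inequality[of ?L "Suc t" mu] assms by (simp add: a_def b_def c_def)
    have "b > 0"
    proof (rule ccontr)
      assume "\<not> b > 0"
      then have "(mu i * a) * (- b) \<ge> (- b) * (- b)" using s1 by (intro mult_right_mono) auto
      moreover have "a * c > a * (- mu i * b)" using s2 apos by (intro mult_strict_left_mono) auto
      ultimately show False using newton by (simp add: power2_eq_square algebra_simps)
    qed
    then show ?thesis
      using IH Suc by (auto simp: in_Gamma_def b_def le_Suc_eq)
  qed (simp add: in_Gamma_def)
qed (simp add: in_Gamma_def)

text \<open>Chaining Newton's inequalities \<open>\<sigma>\<^sub>j\<^sub>-\<^sub>1 \<sigma>\<^sub>j\<^sub>+\<^sub>1 \<le> \<sigma>\<^sub>j\<^sup>2\<close>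
  for \<open>l \<le> j < k\<close> shows that \<open>\<sigma>\<^sub>j / \<sigma>\<^sub>j\<^sub>-\<^sub>1\<close> is non-increasing.\<close>

lemma esym_cross_le:
  fixes mu :: "'b \<Rightarrow> real"
  assumes "finite L" "in_Gamma (k - 1) L mu" "1 \<le> l" "l < k"
  shows "esym k L mu * esym (l - 1) L mu \<le> esym l L mu * esym (k - 1) L mu"
proof -
  have pos: "esym j L mu > 0" if "j \<le> k - 1" for j
    using in_Gamma_esym_pos[OF assms(1,2) that] .
  have "l \<le> k - 1" using assms by simp
  then have "esym (Suc (k - 1)) L mu * esym (l - 1) L mu \<le> esym l L mu * esym (k - 1) L mu"
  proof (induction rule: dec_induct)
    case base
    show ?case using newton_inequality[OF assms(1,3), of mu] assms(3)
      by (simp add: power2_eq_square mult.commute)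
  next
    case (step j)
    have "esym j L mu * (esym (Suc (Suc j)) L mu * esym (l - 1) L mu)
        \<le> (esym (Suc j) L mu)\<^sup>2 * esym (l - 1) L mu"
      using newton_inequality[OF assms(1), of "Suc j" mu] pos[of "l - 1"] step
      by (simp add: mult.assoc[symmetric] mult_right_mono)
    also have "\<dots> \<le> esym (Suc j) L mu * (esym l L mu * esym j L mu)"
      using step.IH pos[of "Suc j"] step by (simp add: power2_eq_square mult.assoc mult_left_mono)
    finally show ?case using pos[of j] step by (simp add: mult.left_commute mult_le_cancel_left_pos)
  qed
  then show ?thesis using assms by simp
qed

lemma esym_Suc_fun_upd_add:
  assumes "finite A" "i \<in> A"
  shows "esym (Suc m) A (mu(i := mu i + s)) = esym (Suc m) A mu + s * esym m (A - {i}) mu"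
proof -
  have "esym j (A - {i}) (mu(i := mu i + s)) = esym j (A - {i}) mu" for j by (rule esym_cong) simp
  then show ?thesis using esym_Suc_remove[OF assms, of _ "mu(i := mu i + s)"] esym_Suc_remove[OF assms, of _ mu]
    by (simp add: algebra_simps)
qed

lemma in_Gamma_increase:
  fixes mu :: "'b \<Rightarrow> real"
  assumes A: "finite A" "i \<in> A" and G: "in_Gamma k A mu" and s: "s \<ge> 0"
  shows "in_Gamma k A (mu(i := mu i + s))"
  unfolding in_Gamma_def
proof (intro allI impI)
  fix j assume j: "1 \<le> j \<and> j \<le> k"
  then obtain m where m: "j = Suc m" by (cases j) auto
  have "m \<le> k - 1" using j m by simp
  then have "esym m (A - {i}) mu > 0" using in_Gamma_esym_pos[OF _ in_Gamma_remove[OF A G]] A(1) by simp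
  then have "s * esym m (A - {i}) mu \<ge> 0" using s by simp
  moreover have "esym j A mu > 0" using G j by (simp add: in_Gamma_def)
  ultimately show "esym j A (mu(i := mu i + s)) > 0" using esym_Suc_fun_upd_add[OF A] m by simp
qed

lemma esym_ratio_increase:
  fixes mu :: "'b \<Rightarrow> real"
  assumes A: "finite A" "i \<in> A" and G: "in_Gamma k A mu" and s: "s \<ge> 0" and lk: "l < k"
  shows "esym k A mu / esym l A mu \<le> esym k A (mu(i := mu i + s)) / esym l A (mu(i := mu i + s))"
proof -
  let ?L = "A - {i}"
  have fL: "finite ?L" using A by simp
  have GL: "in_Gamma (k - 1) ?L mu" using in_Gamma_remove[OF A G] .
  note rec = esym_Suc_fun_upd_add[OF A, of _ mu s]
  obtain k' where k': "k = Suc k'" using lk by (cases k) auto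
  show ?thesis
  proof (cases l)
    case 0
    then show ?thesis using rec[of k'] k' in_Gamma_esym_pos[OF fL GL, of k'] s A by (simp add: esym_0)
  next
    case (Suc l')
    define a where "a = esym k A mu"
    define b where "b = esym k' ?L mu"
    define c where "c = esym l A mu"
    define d where "d = esym l' ?L mu"
    have "l' \<le> k - 1" using Suc lk by simp
    then have "d \<ge> 0" using in_Gamma_esym_pos[OF fL GL, of l'] by (simp add: d_def)
    moreover have "c > 0" using G Suc lk by (simp add: c_def in_Gamma_def)
    moreover have "a * d \<le> c * b"
    proof -
      have "esym k ?L mu * d \<le> esym l ?L mu * b"
        using esym_cross_le[OF fL GL, of l] Suc lk k' by (simp add: b_def d_def)
      then show ?thesis using esym_Suc_remove[OF A, of k' mu] esym_Suc_remove[OF A, of l' mu] k' Suc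
        by (simp add: a_def b_def c_def d_def algebra_simps)
    qed
    moreover have "a * (c + s * d) \<le> c * (a + s * b)"
      using mult_left_mono[OF \<open>a * d \<le> c * b\<close> s] by (simp add: algebra_simps)
    ultimately have "a / c \<le> (a + s * b) / (c + s * d)"
      using s by (simp add: divide_simps add_pos_nonneg mult.commute)
    then show ?thesis using rec[of k'] rec[of l'] k' Suc by (simp add: a_def b_def c_def d_def)
  qed
qed

text \<open>Raise the coordinates one at a time.\<close>

lemma esym_ratio_mono:
  fixes mu nu :: "'b \<Rightarrow> real"
  assumes A: "finite A" and G: "in_Gamma k A mu" and le: "\<forall>a\<in>A. mu a \<le> nu a" and lk: "l < k"
  shows "esym k A mu / esym l A mu \<le> esym k A nu / esym l A nu"
proof -
  define rho where "rho = (\<lambda>B a. if a \<in> B then nu a else mu a)"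
  have step: "in_Gamma k A (rho B) \<and> esym k A mu / esym l A mu \<le> esym k A (rho B) / esym l A (rho B)"
    if "B \<subseteq> A" for B
    using finite_subset[OF that A] that
  proof (induction B rule: finite_induct)
    case empty
    have "rho {} = mu" by (simp add: rho_def fun_eq_iff)
    then show ?case using G by simp
  next
    case (insert b B)
    then have b: "b \<in> A" "nu b - mu b \<ge> 0" using le by auto
    have eq: "rho (insert b B) = (rho B)(b := rho B b + (nu b - mu b))"
      using insert by (simp add: rho_def fun_eq_iff)
    have "in_Gamma k A (rho B)" and "esym k A mu / esym l A mu \<le> esym k A (rho B) / esym l A (rho B)"
      using insert by auto
    then show ?case
      unfolding eq using in_Gamma_increase[OF A b(1) _ b(2)] esym_ratio_increase[OF A b(1) _ b(2) lk]
      by (meson order_trans)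
  qed
  moreover have "esym m A (rho A) = esym m A nu" for m by (rule esym_cong) (simp add: rho_def)
  ultimately show ?thesis using step[of A] by simp
qed

section \<open>Quadratic forms on a tangent space\<close>

lemma bilinear_inner: "bilinear ((\<bullet>) :: 'a::euclidean_space \<Rightarrow> 'a \<Rightarrow> real)"
  using bilinear_conv_bounded_bilinear bounded_bilinear_inner by blast

lemma bilinear_diagonal_sum:
  assumes B: "bilinear B" and I: "finite I"
    and diag: "\<And>i k. i \<in> I \<Longrightarrow> k \<in> I \<Longrightarrow> i \<noteq> k \<Longrightarrow> B (e i) (e k) = 0"
  shows "B (\<Sum>i\<in>I. c i *\<^sub>R e i) (\<Sum>i\<in>I. c i *\<^sub>R e i) = (\<Sum>i\<in>I. (c i)\<^sup>2 * B (e i) (e i))"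
proof -
  have "B (\<Sum>i\<in>I. c i *\<^sub>R e i) (\<Sum>i\<in>I. c i *\<^sub>R e i) = (\<Sum>(i, k)\<in>I \<times> I. B (c i *\<^sub>R e i) (c k *\<^sub>R e k))"
    by (rule bilinear_sum[OF B])
  also have "\<dots> = (\<Sum>i\<in>I. \<Sum>k\<in>I. if k = i then (c i)\<^sup>2 * B (e i) (e i) else 0)"
    unfolding sum.cartesian_product[symmetric]
    by (intro sum.cong refl) (auto simp: bilinear_lmul[OF B] bilinear_rmul[OF B] diag power2_eq_square)
  also have "\<dots> = (\<Sum>i\<in>I. (c i)\<^sup>2 * B (e i) (e i))"
    using I by simp
  finally show ?thesis .
qed

lemma tframe_norm_combination:
  assumes "tframe n x e" "I \<subseteq> {..<n}" "finite I"
  shows "(norm (\<Sum>i\<in>I. c i *\<^sub>R e i))\<^sup>2 = (\<Sum>i\<in>I. (c i)\<^sup>2)"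
  using bilinear_diagonal_sum[OF bilinear_inner assms(3), of e c] assms(1,2)
  by (auto simp: power2_norm_eq_inner tframe_def subset_iff)

lemma tframe_sum_inner_square:
  fixes x :: "'a::euclidean_space"
  assumes dim: "DIM('a) = n + 1" and x: "norm x = 1" and e: "tframe n x e"
  shows "(\<Sum>i<n. (w \<bullet> e i)\<^sup>2) = (norm w)\<^sup>2 - (w \<bullet> x)\<^sup>2"
proof -
  define f where "f i = (if i < n then e i else x)" for i
  have f: "f i \<bullet> f k = (if i = k then 1 else 0)" if "i \<le> n" "k \<le> n" for i k
    using e x that by (auto simp: f_def tframe_def inner_commute norm_eq_1)
  have "inj_on f {..n}"
  proof (rule inj_onI)
    fix i k assume "i \<in> {..n}" "k \<in> {..n}" "f i = f k"
    then show "i = k" using f[of i k] f[of k k] by (simp split: if_splits)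
  qed
  then have card: "card (f ` {..n}) = DIM('a)" by (simp add: card_image dim)
  have orth: "pairwise orthogonal (f ` {..n})"
    using f by (auto simp: pairwise_def orthogonal_def)
  moreover have unit: "\<And>b. b \<in> f ` {..n} \<Longrightarrow> norm b = 1"
    using f by (auto simp: norm_eq_1)
  moreover have "independent (f ` {..n})"
    by (rule pairwise_orthogonal_independent[OF orth]) (use unit in force)
  then have "w \<in> span (f ` {..n})"
    using card_eq_dim[of "f ` {..n}" UNIV] card by auto
  ultimately have "(\<Sum>b\<in>f ` {..n}. (w \<bullet> b) *\<^sub>R b) = w"
    by (intro orthonormal_basis_expand) auto
  then have "(norm w)\<^sup>2 = w \<bullet> (\<Sum>b\<in>f ` {..n}. (w \<bullet> b) *\<^sub>R b)"
    by (simp add: power2_norm_eq_inner)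
  also have "\<dots> = (\<Sum>i\<le>n. (w \<bullet> f i)\<^sup>2)"
    using \<open>inj_on f {..n}\<close> by (simp add: sum.reindex inner_sum_right power2_eq_square)
  also have "\<dots> = (\<Sum>i<n. (w \<bullet> e i)\<^sup>2) + (w \<bullet> x)\<^sup>2"
    by (simp add: lessThan_Suc_atMost[symmetric] f_def)
  finally show ?thesis by simp
qed

text \<open>Greedy diagonalisation: \<open>e k\<close> maximises the quadratic form among the unit tangent
  vectors orthogonal to \<open>e 0, \<dots>, e (k - 1)\<close>.\<close>

definition perp_sphere :: "'a::euclidean_space \<Rightarrow> nat \<Rightarrow> (nat \<Rightarrow> 'a) \<Rightarrow> 'a set" where
  "perp_sphere x j e = {v. norm v = 1 \<and> v \<bullet> x = 0 \<and> (\<forall>i<j. v \<bullet> e i = 0)}"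

definition max_frame :: "('a::euclidean_space \<Rightarrow> 'a \<Rightarrow> real) \<Rightarrow> 'a \<Rightarrow> nat \<Rightarrow> (nat \<Rightarrow> 'a) \<Rightarrow> bool" where
  "max_frame B x n e \<longleftrightarrow>
     (\<forall>k<n. e k \<in> perp_sphere x k e \<and> (\<forall>v\<in>perp_sphere x k e. B v v \<le> B (e k) (e k)))"

lemma perp_sphere_cong: "(\<And>i. i < j \<Longrightarrow> e' i = e i) \<Longrightarrow> perp_sphere x j e' = perp_sphere x j e"
  unfolding perp_sphere_def by auto

lemma compact_perp_sphere: "compact (perp_sphere x j e)"
proof -
  have "perp_sphere x j e = sphere 0 1 \<inter> ({v. x \<bullet> v = 0} \<inter> (\<Inter>i\<in>{..<j}. {v. e i \<bullet> v = 0}))"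
    unfolding perp_sphere_def by (auto simp: inner_commute)
  then show ?thesis
    by (metis closed_INT closed_Int closed_hyperplane compact_Int_closed compact_sphere)
qed

lemma perp_sphere_nonempty:
  fixes x :: "'a::euclidean_space"
  assumes "DIM('a) = n + 1" "j < n"
  shows "perp_sphere x j e \<noteq> {}"
proof -
  let ?S = "insert x (e ` {..<j})"
  have "dim ?S \<le> card ?S" by (rule dim_le_card) (auto intro: span_base)
  also have "\<dots> \<le> Suc j" by (metis card_image_le card_insert_le_m1 card_lessThan finite_lessThan
        finite_imageI card_insert_if le_SucI le_refl not_less_eq_eq)
  finally have "dim ?S < DIM('a)" using assms by simp
  then obtain y where y: "y \<noteq> 0" "\<And>z. z \<in> span ?S \<Longrightarrow> orthogonal y z"
    using orthogonal_to_subspace_exists by blast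
  then have "(1 / norm y) *\<^sub>R y \<in> perp_sphere x j e"
    unfolding perp_sphere_def using y(2)[OF span_base] by (auto simp: orthogonal_def)
  then show ?thesis by blast
qed

lemma exists_max_frame:
  fixes x :: "'a::euclidean_space"
  assumes dim: "DIM('a) = n + 1" and B: "bilinear B"
  shows "\<exists>e. max_frame B x n e"
proof -
  have cont: "continuous_on S (\<lambda>v. B v v)" for S
    by (intro bilinear_continuous_on_compose[OF _ _ B] continuous_on_id)
  have "j \<le> n \<Longrightarrow> \<exists>e. max_frame B x j e" for j
  proof (induction j)
    case (Suc j)
    then obtain e where e: "max_frame B x j e" by auto
    obtain v where v: "v \<in> perp_sphere x j e" "\<forall>w\<in>perp_sphere x j e. B w w \<le> B v v"
      using continuous_attains_sup[OF compact_perp_sphere perp_sphere_nonempty[OF dim] cont] Suc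
      by (metis Suc_le_lessD)
    have "perp_sphere x i (e(j := v)) = perp_sphere x i e" if "i \<le> j" for i
      by (rule perp_sphere_cong) (use that in simp)
    then have "max_frame B x (Suc j) (e(j := v))"
      using e v unfolding max_frame_def by (auto simp: less_Suc_eq)
    then show ?case by blast
  qed (metis max_frame_def not_less_zero)
  then show ?thesis by simp
qed

lemma max_frame_tframe:
  assumes "max_frame B x n e"
  shows "tframe n x e"
proof -
  have mem: "e k \<in> perp_sphere x k e" if "k < n" for k using assms that by (simp add: max_frame_def)
  show ?thesis
    unfolding tframe_def
  proof (intro conjI allI impI)
    fix i k assume "i < n" "k < n"
    then show "e i \<bullet> e k = (if i = k then 1 else 0)"
      using mem[of i] mem[of k]
      by (cases i k rule: linorder_cases) (auto simp: perp_sphere_def inner_commute norm_eq_1)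
  next
    fix i assume "i < n"
    then show "e i \<bullet> x = 0" using mem[of i] by (simp add: perp_sphere_def)
  qed
qed

lemma max_frame_antimono:
  assumes "max_frame B x n e" "i \<le> k" "k < n"
  shows "B (e k) (e k) \<le> B (e i) (e i)"
proof -
  have "e k \<in> perp_sphere x k e" using assms by (simp add: max_frame_def)
  then have "e k \<in> perp_sphere x i e" using assms(2) by (auto simp: perp_sphere_def)
  then show ?thesis using assms by (simp add: max_frame_def)
qed

lemma linear_coeff_eq_0_if_quadratic_nonpos:
  fixes \<beta> \<gamma> :: real
  assumes "\<And>t. 2 * t * \<beta> + t\<^sup>2 * \<gamma> \<le> 0"
  shows "\<beta> = 0"
proof (rule ccontr)
  assume "\<beta> \<noteq> 0"
  define D where "D = \<bar>\<gamma>\<bar> + 1"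
  have "D > 0" "2 * D + \<gamma> > 0" by (auto simp: D_def)
  have "2 * (\<beta> / D) * \<beta> + (\<beta> / D)\<^sup>2 * \<gamma> = \<beta>\<^sup>2 / D\<^sup>2 * (2 * D + \<gamma>)"
    using \<open>D > 0\<close> by (simp add: power2_eq_square field_simps)
  also have "\<dots> > 0" using \<open>\<beta> \<noteq> 0\<close> \<open>D > 0\<close> \<open>2 * D + \<gamma> > 0\<close> by simp
  finally show False using assms[of "\<beta> / D"] by simp
qed

text \<open>If \<open>B (e i) (e k) \<noteq> 0\<close> for \<open>i < k\<close>, rotating \<open>e i\<close> slightly towards \<open>e k\<close>
  would increase \<open>B\<close> to first order, contradicting the maximality of \<open>e i\<close>.\<close>

lemma max_frame_diagonal:
  assumes e: "max_frame B x n e" and B: "bilinear B" and sym: "\<And>v w. B v w = B w v"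
    and ik: "i < n" "k < n" "i \<noteq> k"
  shows "B (e i) (e k) = 0"
proof -
  have "B (e i) (e k) = 0" if ik: "i < k" "k < n" for i k
  proof -
    let ?u = "e i" and ?w = "e k"
    have tf: "tframe n x e" by (rule max_frame_tframe[OF e])
    have uw: "?u \<bullet> ?w = 0" "?u \<bullet> ?u = 1" "?w \<bullet> ?w = 1"
      using tf ik by (auto simp: tframe_def)
    have "2 * t * B ?u ?w + t\<^sup>2 * (B ?w ?w - B ?u ?u) \<le> 0" for t
    proof -
      define N where "N = norm (?u + t *\<^sub>R ?w)"
      have N2: "N\<^sup>2 = 1 + t\<^sup>2"
        unfolding N_def power2_norm_eq_inner using uw
        by (simp add: inner_add_left inner_add_right inner_commute power2_eq_square)
      then have "N > 0" using N_def by (metis norm_ge_zero not_one_le_zero le_add_same_cancel1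
            order_less_le power2_eq_square zero_le_power2 mult_zero_left)
      define v where "v = (1 / N) *\<^sub>R (?u + t *\<^sub>R ?w)"
      have "v \<in> perp_sphere x i e"
        using e ik \<open>N > 0\<close> unfolding perp_sphere_def max_frame_def v_def N_def
        by (auto simp: inner_add_left)
      then have "B v v \<le> B ?u ?u" using e ik by (simp add: max_frame_def)
      moreover have "B (?u + t *\<^sub>R ?w) (?u + t *\<^sub>R ?w) = N\<^sup>2 * B v v"
        using \<open>N > 0\<close> by (simp add: v_def bilinear_lmul[OF B] bilinear_rmul[OF B] power2_eq_square)
      ultimately have "B (?u + t *\<^sub>R ?w) (?u + t *\<^sub>R ?w) \<le> (1 + t\<^sup>2) * B ?u ?u"
        unfolding N2[symmetric] by (simp add: mult_left_mono)
      moreover have "B (?u + t *\<^sub>R ?w) (?u + t *\<^sub>R ?w) = B ?u ?u + 2 * t * B ?u ?w + t\<^sup>2 * B ?w ?w"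
        using sym[of ?w ?u]
        by (simp add: bilinear_ladd[OF B] bilinear_radd[OF B] bilinear_lmul[OF B] bilinear_rmul[OF B]
            power2_eq_square algebra_simps)
      ultimately show ?thesis by (simp add: algebra_simps)
    qed
    then show ?thesis by (rule linear_coeff_eq_0_if_quadratic_nonpos)
  qed
  then show ?thesis using ik sym by (metis linorder_neqE_nat)
qed

text \<open>Dimension count: \<open>j + 1\<close> orthonormal vectors span a space that cannot be
  covered by the orthogonal complements of \<open>j\<close> given vectors.\<close>

lemma exists_combination_orthogonal:
  fixes e w :: "nat \<Rightarrow> 'a::euclidean_space"
  assumes e: "\<And>i k. i \<le> j \<Longrightarrow> k \<le> j \<Longrightarrow> e i \<bullet> e k = (if i = k then 1 else 0)"
  obtains c where "(\<Sum>i\<le>j. c i *\<^sub>R e i) \<noteq> 0" "\<And>m. m < j \<Longrightarrow> (\<Sum>i\<le>j. c i *\<^sub>R e i) \<bullet> w m = 0"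
proof -
  let ?T = "e ` {..j}"
  have inj: "inj_on e {..j}"
  proof (rule inj_onI)
    fix i k assume "i \<in> {..j}" "k \<in> {..j}" "e i = e k"
    then show "i = k" using e[of i k] e[of k k] by (simp split: if_splits)
  qed
  define proj where "proj v = (\<Sum>i\<le>j. (v \<bullet> e i) *\<^sub>R e i)" for v
  let ?S = "(\<lambda>m. proj (w m)) ` {..<j}"
  have "proj v \<in> span ?T" for v
    unfolding proj_def by (intro span_sum span_scale span_base) auto
  then have "span ?S \<subseteq> span ?T" by (simp add: image_subset_iff span_minimal)
  moreover have "dim (span ?S) \<le> j"
  proof -
    have "dim ?S \<le> card ?S" by (rule dim_le_card) (auto intro: span_base)
    then show ?thesis using card_image_le[of "{..<j}" "\<lambda>m. proj (w m)"] by simp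
  qed
  moreover have "dim (span ?T) = Suc j"
  proof -
    have "pairwise orthogonal ?T" "0 \<notin> ?T"
      using e by (auto simp: pairwise_def orthogonal_def) (metis e inner_zero_left zero_neq_one order_refl)
    then have "independent ?T" by (rule pairwise_orthogonal_independent)
    then show ?thesis by (simp add: dim_eq_card_independent card_image[OF inj])
  qed
  ultimately have "span ?S \<subset> span ?T" by (metis le_imp_less_Suc less_irrefl psubsetI)
  then obtain v where v: "v \<noteq> 0" "v \<in> span ?T" "\<And>y. y \<in> span ?S \<Longrightarrow> orthogonal v y"
    using orthogonal_to_subspace_exists_gen by blast
  obtain u where "v = (\<Sum>y\<in>?T. u y *\<^sub>R y)" using v(2) span_finite[of ?T] by auto
  then have c: "v = (\<Sum>i\<le>j. u (e i) *\<^sub>R e i)" by (simp add: sum.reindex[OF inj])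
  have coords: "v \<bullet> e k = u (e k)" if "k \<le> j" for k
  proof -
    have "v \<bullet> e k = (\<Sum>i\<le>j. if i = k then u (e k) else 0)"
      unfolding c inner_sum_left using that by (intro sum.cong refl) (simp add: e)
    then show ?thesis using that by simp
  qed
  have "v \<bullet> w m = 0" if "m < j" for m
  proof -
    have "v \<bullet> proj (w m) = (\<Sum>i\<le>j. (w m \<bullet> e i) * (v \<bullet> e i))"
      by (simp add: proj_def inner_sum_right)
    also have "\<dots> = (\<Sum>i\<le>j. (w m \<bullet> e i) * u (e i))" by (intro sum.cong refl) (simp add: coords)
    also have "\<dots> = v \<bullet> w m" unfolding c inner_sum_left by (simp add: inner_commute mult.commute)
    finally show ?thesis using v(3)[OF span_base] that by (auto simp: orthogonal_def)
  qed
  then show ?thesis using v(1) c that by metis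
qed

lemma exists_unit_combination_orthogonal:
  fixes e w :: "nat \<Rightarrow> 'a::euclidean_space"
  assumes e: "\<And>i k. i \<le> j \<Longrightarrow> k \<le> j \<Longrightarrow> e i \<bullet> e k = (if i = k then 1 else 0)"
  obtains d where "(\<Sum>i\<le>j. (d i)\<^sup>2) = 1" "\<And>m. m < j \<Longrightarrow> (\<Sum>i\<le>j. d i *\<^sub>R e i) \<bullet> w m = 0"
proof -
  obtain c where v: "(\<Sum>i\<le>j. c i *\<^sub>R e i) \<noteq> 0" and perp: "\<And>m. m < j \<Longrightarrow> (\<Sum>i\<le>j. c i *\<^sub>R e i) \<bullet> w m = 0"
    using exists_combination_orthogonal[OF e] by blast
  define N where "N = norm (\<Sum>i\<le>j. c i *\<^sub>R e i)"
  have N2: "N\<^sup>2 = (\<Sum>i\<le>j. (c i)\<^sup>2)"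
    using bilinear_diagonal_sum[OF bilinear_inner, of "{..j}" e c] e by (simp add: N_def power2_norm_eq_inner)
  show ?thesis
  proof (rule that[of "\<lambda>i. c i / N"])
    show "(\<Sum>i\<le>j. (c i / N)\<^sup>2) = 1"
      using v by (simp add: N_def power_divide sum_divide_distrib[symmetric] flip: N2)
    have "(\<Sum>i\<le>j. (c i / N) *\<^sub>R e i) = (1 / N) *\<^sub>R (\<Sum>i\<le>j. c i *\<^sub>R e i)"
      by (simp add: scaleR_sum_right)
    then show "(\<Sum>i\<le>j. (c i / N) *\<^sub>R e i) \<bullet> w m = 0" if "m < j" for m
      using perp[OF that] by simp
  qed
qed

text \<open>Courant--Fischer: test the maximality of \<open>e2 j\<close> against a unit vector of
  \<open>span {e1 0, \<dots>, e1 j}\<close> orthogonal to \<open>e2 0, \<dots>, e2 (j - 1)\<close>.\<close>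

lemma max_frame_le:
  fixes x :: "'a::euclidean_space"
  assumes e1: "max_frame B1 x n e1" and e2: "max_frame B2 x n e2"
    and B1: "bilinear B1" "\<And>v w. B1 v w = B1 w v"
    and le: "\<And>v. v \<bullet> x = 0 \<Longrightarrow> B1 v v \<le> M * B2 v v" and M: "M \<ge> 0" and j: "j < n"
  shows "B1 (e1 j) (e1 j) \<le> M * B2 (e2 j) (e2 j)"
proof -
  have tf: "tframe n x e1" by (rule max_frame_tframe[OF e1])
  then obtain d where d: "(\<Sum>i\<le>j. (d i)\<^sup>2) = 1" and perp: "\<And>m. m < j \<Longrightarrow> (\<Sum>i\<le>j. d i *\<^sub>R e1 i) \<bullet> e2 m = 0"
    using exists_unit_combination_orthogonal[of j e1] j by (auto simp: tframe_def)
  define u where "u = (\<Sum>i\<le>j. d i *\<^sub>R e1 i)"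
  have "u \<bullet> x = 0" using tf j by (simp add: u_def tframe_def inner_sum_left)
  moreover have "{..j} \<subseteq> {..<n}" using j by auto
  then have "(norm u)\<^sup>2 = 1\<^sup>2"
    using tframe_norm_combination[OF tf, of "{..j}" d] d by (simp add: u_def)
  then have "norm u = 1" by (rule power2_eq_imp_eq) simp_all
  ultimately have "u \<in> perp_sphere x j e2" using perp by (simp add: perp_sphere_def u_def)
  then have "B2 u u \<le> B2 (e2 j) (e2 j)" using e2 j by (simp add: max_frame_def)
  have "B1 (e1 j) (e1 j) = (\<Sum>i\<le>j. (d i)\<^sup>2 * B1 (e1 j) (e1 j))"
    using d by (simp add: sum_distrib_right[symmetric])
  also have "\<dots> \<le> (\<Sum>i\<le>j. (d i)\<^sup>2 * B1 (e1 i) (e1 i))"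
    using max_frame_antimono[OF e1] j by (intro sum_mono mult_left_mono) auto
  also have "\<dots> = B1 u u"
    unfolding u_def using j by (intro bilinear_diagonal_sum[symmetric] B1(1) max_frame_diagonal[OF e1 B1]) auto
  also have "\<dots> \<le> M * B2 u u" using le \<open>u \<bullet> x = 0\<close> by blast
  also have "\<dots> \<le> M * B2 (e2 j) (e2 j)" using \<open>B2 u u \<le> B2 (e2 j) (e2 j)\<close> M by (rule mult_left_mono)
  finally show ?thesis .
qed

section \<open>Second-order calculus along great circles\<close>

definition great_circle :: "'a::euclidean_space \<Rightarrow> 'a \<Rightarrow> real \<Rightarrow> 'a" where
  "great_circle x v t = cos (t * norm v) *\<^sub>R x + (sin (t * norm v) / norm v) *\<^sub>R v"

definition great_circle_velocity :: "'a::euclidean_space \<Rightarrow> 'a \<Rightarrow> real \<Rightarrow> 'a" where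
  "great_circle_velocity x v t = (- norm v * sin (t * norm v)) *\<^sub>R x + cos (t * norm v) *\<^sub>R v"

lemma sphere_exp_scaleR: "sphere_exp x (t *\<^sub>R v) = great_circle x v t"
proof (cases "v = 0 \<or> t = 0")
  case False
  then have "norm v > 0" "t \<noteq> 0" by auto
  then consider "t > 0" | "t < 0" by linarith
  then show ?thesis
    by cases (use \<open>norm v > 0\<close> in \<open>simp_all add: sphere_exp_def great_circle_def field_simps\<close>)
qed (auto simp: sphere_exp_def great_circle_def)

lemma great_circle_0 [simp]: "great_circle x v 0 = x"
  and great_circle_velocity_0 [simp]: "great_circle_velocity x v 0 = v"
  by (simp_all add: great_circle_def great_circle_velocity_def)

lemma great_circle_has_vector_derivative:
  "(great_circle x v has_vector_derivative great_circle_velocity x v t) (at t)"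
proof (cases "v = 0")
  case True
  then have "great_circle x v = (\<lambda>t. x)" "great_circle_velocity x v t = 0"
    by (simp_all add: great_circle_def great_circle_velocity_def fun_eq_iff)
  then show ?thesis by simp
next
  case False
  then have "norm v \<noteq> 0" by simp
  then show ?thesis
    unfolding great_circle_def great_circle_velocity_def
    by (auto intro!: derivative_eq_intros simp: has_real_derivative_iff_has_vector_derivative[symmetric]
        algebra_simps)
qed

lemma great_circle_velocity_has_vector_derivative_0:
  "(great_circle_velocity x v has_vector_derivative (- (norm v)\<^sup>2) *\<^sub>R x) (at 0)"
  unfolding great_circle_velocity_def
  by (auto intro!: derivative_eq_intros simp: power2_eq_square)

lemma norm_great_circle:
  assumes "norm x = 1" "v \<bullet> x = 0"
  shows "norm (great_circle x v t) = 1"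
proof (cases "v = 0")
  case False
  define c where "c = cos (t * norm v)"
  define s where "s = sin (t * norm v) / norm v"
  have "(great_circle x v t) \<bullet> (great_circle x v t) = c\<^sup>2 * (x \<bullet> x) + 2 * c * s * (v \<bullet> x) + s\<^sup>2 * (v \<bullet> v)"
    unfolding great_circle_def c_def[symmetric] s_def[symmetric]
    by (simp add: inner_add_left inner_add_right inner_commute power2_eq_square algebra_simps)
  also have "\<dots> = (cos (t * norm v))\<^sup>2 + (sin (t * norm v) / norm v)\<^sup>2 * (norm v)\<^sup>2"
    using assms by (simp add: c_def s_def power2_norm_eq_inner norm_eq_1)
  also have "\<dots> = 1" using False by (simp add: power_divide)
  finally show ?thesis by (simp add: norm_eq_1)
qed (use assms in \<open>simp add: great_circle_def\<close>)

definition sphere_derivs :: "('a::euclidean_space \<Rightarrow> real) \<Rightarrow> ('a \<Rightarrow> 'a \<Rightarrow>\<^sub>L real)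
    \<Rightarrow> ('a \<Rightarrow> 'a \<Rightarrow>\<^sub>L 'a \<Rightarrow>\<^sub>L real) \<Rightarrow> bool" where
  "sphere_derivs u f' f'' \<longleftrightarrow> (\<forall>y\<in>sphere 0 1.
     (u has_derivative blinfun_apply (f' y)) (at y) \<and> (f' has_derivative blinfun_apply (f'' y)) (at y))"

lemma C2_sphere_imp_sphere_derivs:
  assumes "C2_sphere u"
  obtains f' f'' where "sphere_derivs u f' f''"
  using assms unfolding C2_sphere_def C2_on_def sphere_derivs_def by blast

lemma sphere_derivs_continuous_on:
  "sphere_derivs u f' f'' \<Longrightarrow> continuous_on (sphere 0 1) u"
  unfolding sphere_derivs_def
  by (meson continuous_at_imp_continuous_on has_derivative_continuous)

lemma great_circle_derivs:
  fixes u :: "'a::euclidean_space \<Rightarrow> real"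
  assumes u: "sphere_derivs u f' f''" and x: "norm x = 1" and v: "v \<bullet> x = 0"
  shows "((\<lambda>t. u (great_circle x v t)) has_real_derivative
           blinfun_apply (f' (great_circle x v t)) (great_circle_velocity x v t)) (at t)"
    and "((\<lambda>t. blinfun_apply (f' (great_circle x v t)) (great_circle_velocity x v t)) has_real_derivative
           blinfun_apply (blinfun_apply (f'' x) v) v - (norm v)\<^sup>2 * blinfun_apply (f' x) x) (at 0)"
proof -
  have on_sphere: "great_circle x v t \<in> sphere 0 1" for t using norm_great_circle[OF x v] by simp
  have "(u has_derivative blinfun_apply (f' (great_circle x v t)))
      (at (great_circle x v t) within range (great_circle x v))"
    using u on_sphere by (auto simp: sphere_derivs_def intro: has_derivative_at_withinI)
  from vector_derivative_diff_chain_within[OF great_circle_has_vector_derivative this]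
  show "((\<lambda>t. u (great_circle x v t)) has_real_derivative
      blinfun_apply (f' (great_circle x v t)) (great_circle_velocity x v t)) (at t)"
    by (simp add: has_real_derivative_iff_has_vector_derivative comp_def)
  have "(f' has_derivative blinfun_apply (f'' x)) (at (great_circle x v 0) within range (great_circle x v))"
    using u on_sphere[of 0] by (auto simp: sphere_derivs_def intro: has_derivative_at_withinI)
  from vector_derivative_diff_chain_within[OF great_circle_has_vector_derivative this]
  have "((\<lambda>t. f' (great_circle x v t)) has_vector_derivative blinfun_apply (f'' x) v) (at 0)"
    by (simp add: comp_def)
  from bounded_bilinear.has_vector_derivative[OF bounded_bilinear_blinfun_apply this
      great_circle_velocity_has_vector_derivative_0[of x v]]
  show "((\<lambda>t. blinfun_apply (f' (great_circle x v t)) (great_circle_velocity x v t)) has_real_derivative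
      blinfun_apply (blinfun_apply (f'' x) v) v - (norm v)\<^sup>2 * blinfun_apply (f' x) x) (at 0)"
    by (simp add: has_real_derivative_iff_has_vector_derivative blinfun.scaleR_right blinfun.minus_right
        algebra_simps)
qed

definition tangent_hessian :: "('a::euclidean_space \<Rightarrow>\<^sub>L 'a \<Rightarrow>\<^sub>L real) \<Rightarrow> real \<Rightarrow> 'a \<Rightarrow> 'a \<Rightarrow> real" where
  "tangent_hessian L c v w =
     (blinfun_apply (blinfun_apply L v) w + blinfun_apply (blinfun_apply L w) v) / 2 - (v \<bullet> w) * c"

lemma bilinear_tangent_hessian: "bilinear (tangent_hessian L c)"
  unfolding bilinear_def tangent_hessian_def
  by (auto intro!: linearI simp: blinfun.add_left blinfun.add_right blinfun.scaleR_left
      blinfun.scaleR_right inner_add_left inner_add_right algebra_simps add_divide_distrib)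

lemma tangent_hessian_commute: "tangent_hessian L c v w = tangent_hessian L c w v"
  by (simp add: tangent_hessian_def inner_commute add.commute)

lemma tangent_hessian_diag:
  "tangent_hessian L c v v = blinfun_apply (blinfun_apply L v) v - (norm v)\<^sup>2 * c"
  by (simp add: tangent_hessian_def power2_norm_eq_inner)

lemma sph_grad_sph_hess:
  fixes u :: "'a::euclidean_space \<Rightarrow> real"
  assumes u: "sphere_derivs u f' f''" and x: "norm x = 1" and v: "v \<bullet> x = 0"
  shows "sph_grad u x v = blinfun_apply (f' x) v"
    and "sph_hess u x v = tangent_hessian (f'' x) (blinfun_apply (f' x) x) v v"
proof -
  note d = great_circle_derivs[OF u x v]
  have "deriv (\<lambda>t. u (sphere_exp x (t *\<^sub>R v)))
      = (\<lambda>t. blinfun_apply (f' (great_circle x v t)) (great_circle_velocity x v t))"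
    unfolding sphere_exp_scaleR using d(1) by (auto intro!: DERIV_imp_deriv)
  then show "sph_grad u x v = blinfun_apply (f' x) v"
    and "sph_hess u x v = tangent_hessian (f'' x) (blinfun_apply (f' x) x) v v"
    unfolding sph_grad_def sph_hess_def tangent_hessian_diag by (simp_all add: DERIV_imp_deriv[OF d(2)])
qed

lemma local_max_deriv_conditions:
  fixes d D :: "real \<Rightarrow> real"
  assumes d: "\<And>t. (d has_real_derivative D t) (at t)" and D: "(D has_real_derivative c) (at 0)"
    and max: "\<And>t. d t \<le> d 0"
  shows "D 0 = 0" and "c \<le> 0"
proof -
  show D0: "D 0 = 0" by (rule DERIV_local_max[OF d zero_less_one]) (use max in auto)
  show "c \<le> 0"
  proof (rule ccontr)
    assume "\<not> c \<le> 0"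
    with DERIV_pos_inc_right[OF D] obtain e where e: "e > 0" "\<And>h. 0 < h \<Longrightarrow> h < e \<Longrightarrow> D 0 < D h"
      by force
    obtain z where z: "0 < z" "z < e / 2" "d (e / 2) - d 0 = (e / 2 - 0) * D z"
      using MVT2[of 0 "e / 2" d D] d e(1) by auto
    have "D z > 0" using e(2)[of z] D0 z by simp
    then have "(e / 2 - 0) * D z > 0" using e(1) by simp
    then show False using max[of "e / 2"] z(3) by linarith
  qed
qed

lemma touching_point_derivs:
  fixes u1 u2 :: "'a::euclidean_space \<Rightarrow> real"
  assumes u1: "sphere_derivs u1 f1 F1" and u2: "sphere_derivs u2 f2 F2"
    and le: "\<forall>y\<in>sphere 0 1. u1 y \<le> M * u2 y" and x0: "norm x0 = 1" and eq: "u1 x0 = M * u2 x0"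
    and v: "v \<bullet> x0 = 0"
  shows "blinfun_apply (f1 x0) v = M * blinfun_apply (f2 x0) v"
    and "tangent_hessian (F1 x0) (blinfun_apply (f1 x0) x0) v v
       \<le> M * tangent_hessian (F2 x0) (blinfun_apply (f2 x0) x0) v v"
proof -
  let ?\<gamma> = "great_circle x0 v" and ?\<gamma>' = "great_circle_velocity x0 v"
  note d1 = great_circle_derivs[OF u1 x0 v] and d2 = great_circle_derivs[OF u2 x0 v]
  define D where "D t = blinfun_apply (f1 (?\<gamma> t)) (?\<gamma>' t) - M * blinfun_apply (f2 (?\<gamma> t)) (?\<gamma>' t)" for t
  have d: "((\<lambda>t. u1 (?\<gamma> t) - M * u2 (?\<gamma> t)) has_real_derivative D t) (at t)" for t
    unfolding D_def by (rule DERIV_diff[OF d1(1) DERIV_cmult[OF d2(1)]])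
  have D: "(D has_real_derivative
      tangent_hessian (F1 x0) (blinfun_apply (f1 x0) x0) v v
      - M * tangent_hessian (F2 x0) (blinfun_apply (f2 x0) x0) v v) (at 0)"
    unfolding D_def tangent_hessian_diag by (rule DERIV_diff[OF d1(2) DERIV_cmult[OF d2(2)]])
  have "u1 (?\<gamma> t) - M * u2 (?\<gamma> t) \<le> u1 (?\<gamma> 0) - M * u2 (?\<gamma> 0)" for t
    using le norm_great_circle[OF x0 v, of t] eq by simp
  note conds = local_max_deriv_conditions[OF d D this]
  from conds(1) show "blinfun_apply (f1 x0) v = M * blinfun_apply (f2 x0) v"
    by (simp add: D_def)
  from conds(2) show "tangent_hessian (F1 x0) (blinfun_apply (f1 x0) x0) v v
       \<le> M * tangent_hessian (F2 x0) (blinfun_apply (f2 x0) x0) v v"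
    by simp
qed

section \<open>Comparison of two solutions\<close>

lemma finite_Idx: "finite (Idx n P)"
  by (rule finite_subset[of _ "Pow {..<n}"]) (auto simp: Idx_def)

lemma eig_frame_if_max_frame:
  fixes x :: "'a::euclidean_space"
  assumes e: "max_frame B x n e" and B: "bilinear B" "\<And>v w. B v w = B w v"
    and hess: "\<And>v. v \<bullet> x = 0 \<Longrightarrow> sph_hess u x v = B v v"
  shows "eig_frame n u x e (\<lambda>j. B (e j) (e j) + u x)"
  unfolding eig_frame_def
proof (intro conjI allI max_frame_tframe[OF e])
  fix c :: "nat \<Rightarrow> real"
  have tf: "tframe n x e" by (rule max_frame_tframe[OF e])
  then have "(\<Sum>i<n. c i *\<^sub>R e i) \<bullet> x = 0" by (simp add: tframe_def inner_sum_left)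
  then have "sph_hess u x (\<Sum>i<n. c i *\<^sub>R e i) = B (\<Sum>i<n. c i *\<^sub>R e i) (\<Sum>i<n. c i *\<^sub>R e i)"
    by (rule hess)
  also have "\<dots> = (\<Sum>i<n. (c i)\<^sup>2 * B (e i) (e i))"
    by (intro bilinear_diagonal_sum B(1) max_frame_diagonal[OF e B]) auto
  finally show "sph_hess u x (\<Sum>i<n. c i *\<^sub>R e i) + u x * (\<Sum>i<n. (c i)\<^sup>2)
      = (\<Sum>i<n. (B (e i) (e i) + u x) * (c i)\<^sup>2)"
    by (simp add: sum_distrib_left sum.distrib algebra_simps)
qed

lemma tframe_sum_square_eq:
  fixes x :: "'a::euclidean_space" and L :: "'a \<Rightarrow>\<^sub>L real"
  assumes "DIM('a) = n + 1" "norm x = 1" "tframe n x e" "tframe n x e'"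
  shows "(\<Sum>i<n. (blinfun_apply L (e i))\<^sup>2) = (\<Sum>i<n. (blinfun_apply L (e' i))\<^sup>2)"
proof -
  define g where "g = (\<Sum>b\<in>Basis. blinfun_apply L b *\<^sub>R b)"
  have "blinfun_apply L v = g \<bullet> v" for v
  proof -
    have "blinfun_apply L v = (\<Sum>b\<in>Basis. (v \<bullet> b) * blinfun_apply L b)"
      by (subst euclidean_representation[symmetric, of v]) (simp add: blinfun.sum_right blinfun.scaleR_right)
    also have "\<dots> = g \<bullet> v"
      unfolding g_def inner_sum_left by (intro sum.cong refl) (simp add: inner_commute mult.commute)
    finally show ?thesis .
  qed
  then show ?thesis using tframe_sum_inner_square[OF assms(1,2)] assms(3,4) by simp
qed

lemma powr_mult_homogeneous:
  fixes M a G \<alpha> \<beta> :: real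
  assumes "M > 0" "a > 0" "G \<ge> 0"
  shows "(M * a) powr \<alpha> * ((M * a)\<^sup>2 + M\<^sup>2 * G) powr \<beta>
       = M powr (\<alpha> + 2 * \<beta>) * (a powr \<alpha> * (a\<^sup>2 + G) powr \<beta>)"
proof -
  have "(M * a)\<^sup>2 + M\<^sup>2 * G = M\<^sup>2 * (a\<^sup>2 + G)" by (simp add: power_mult_distrib algebra_simps)
  moreover have "(M\<^sup>2) powr \<beta> = M powr (2 * \<beta>)"
    using assms(1) by (simp add: powr_powr[symmetric] powr_numeral)
  moreover have "a\<^sup>2 + G > 0" using assms by (simp add: add_pos_nonneg)
  ultimately show ?thesis
    using assms by (simp add: powr_mult powr_add mult_ac)
qed

lemma touching_point_eigenvalues:
  fixes u1 u2 :: "'a::euclidean_space \<Rightarrow> real"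
  assumes dim: "DIM('a) = n + 1"
    and u1: "sphere_derivs u1 f1 F1" and u2: "sphere_derivs u2 f2 F2"
    and le: "\<forall>y\<in>sphere 0 1. u1 y \<le> M * u2 y" and M: "M \<ge> 0"
    and x0: "norm x0 = 1" and eq: "u1 x0 = M * u2 x0"
  obtains e1 lam1 e2 lam2 where "eig_frame n u1 x0 e1 lam1" "eig_frame n u2 x0 e2 lam2"
    "\<And>j. j < n \<Longrightarrow> lam1 j \<le> M * lam2 j"
    "(\<Sum>i<n. (sph_grad u1 x0 (e1 i))\<^sup>2) = M\<^sup>2 * (\<Sum>i<n. (sph_grad u2 x0 (e2 i))\<^sup>2)"
proof -
  define B1 where "B1 = tangent_hessian (F1 x0) (blinfun_apply (f1 x0) x0)"
  define B2 where "B2 = tangent_hessian (F2 x0) (blinfun_apply (f2 x0) x0)"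
  have B1: "bilinear B1" "\<And>v w. B1 v w = B1 w v"
    unfolding B1_def by (rule bilinear_tangent_hessian tangent_hessian_commute)+
  have B2: "bilinear B2" "\<And>v w. B2 v w = B2 w v"
    unfolding B2_def by (rule bilinear_tangent_hessian tangent_hessian_commute)+
  note touch = touching_point_derivs[OF u1 u2 le x0 eq]
  obtain e1 e2 where e1: "max_frame B1 x0 n e1" and e2: "max_frame B2 x0 n e2"
    using exists_max_frame[OF dim B1(1)] exists_max_frame[OF dim B2(1)] by blast
  have tf1: "tframe n x0 e1" and tf2: "tframe n x0 e2"
    using e1 e2 by (simp_all add: max_frame_tframe)
  show ?thesis
  proof (rule that)
    show "eig_frame n u1 x0 e1 (\<lambda>j. B1 (e1 j) (e1 j) + u1 x0)"
      by (rule eig_frame_if_max_frame[OF e1 B1]) (simp add: sph_grad_sph_hess(2)[OF u1 x0] B1_def)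
    show "eig_frame n u2 x0 e2 (\<lambda>j. B2 (e2 j) (e2 j) + u2 x0)"
      by (rule eig_frame_if_max_frame[OF e2 B2]) (simp add: sph_grad_sph_hess(2)[OF u2 x0] B2_def)
    fix j assume "j < n"
    with max_frame_le[OF e1 e2 B1] touch(2) M have "B1 (e1 j) (e1 j) \<le> M * B2 (e2 j) (e2 j)"
      by (simp add: B1_def B2_def)
    then show "B1 (e1 j) (e1 j) + u1 x0 \<le> M * (B2 (e2 j) (e2 j) + u2 x0)"
      by (simp add: eq distrib_left)
  next
    have "(\<Sum>i<n. (sph_grad u1 x0 (e1 i))\<^sup>2) = (\<Sum>i<n. (blinfun_apply (M *\<^sub>R f2 x0) (e1 i))\<^sup>2)"
      using tf1 by (intro sum.cong refl) (simp add: tframe_def sph_grad_sph_hess(1)[OF u1 x0] touch(1) blinfun.scaleR_left)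
    also have "\<dots> = (\<Sum>i<n. (blinfun_apply (M *\<^sub>R f2 x0) (e2 i))\<^sup>2)"
      by (rule tframe_sum_square_eq[OF dim x0 tf1 tf2])
    also have "\<dots> = M\<^sup>2 * (\<Sum>i<n. (sph_grad u2 x0 (e2 i))\<^sup>2)"
      using tf2 by (simp add: sum_distrib_left power_mult_distrib tframe_def sph_grad_sph_hess(1)[OF u2 x0]
          blinfun.scaleR_left)
    finally show "(\<Sum>i<n. (sph_grad u1 x0 (e1 i))\<^sup>2) = M\<^sup>2 * (\<Sum>i<n. (sph_grad u2 x0 (e2 i))\<^sup>2)" .
  qed
qed

lemma sphere_max_ratio:
  fixes u1 u2 :: "'a::euclidean_space \<Rightarrow> real"
  assumes "continuous_on (sphere 0 1) u1" "continuous_on (sphere 0 1) u2"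
    and pos1: "\<forall>x\<in>sphere 0 1. u1 x > 0" and pos2: "\<forall>x\<in>sphere 0 1. u2 x > 0"
  obtains x0 M where "norm x0 = 1" "M > 0" "u1 x0 = M * u2 x0" "\<forall>y\<in>sphere 0 1. u1 y \<le> M * u2 y"
proof -
  have "continuous_on (sphere 0 1) (\<lambda>y. u1 y / u2 y)"
    using assms by (intro continuous_on_divide) auto
  moreover have "sphere (0::'a) 1 \<noteq> {}" by simp
  ultimately obtain x0 where x0: "x0 \<in> sphere 0 1" and max: "\<forall>y\<in>sphere 0 1. u1 y / u2 y \<le> u1 x0 / u2 x0"
    using continuous_attains_sup[OF compact_sphere] by blast
  have u0: "u1 x0 > 0" "u2 x0 > 0" using pos1 pos2 x0 by auto
  show ?thesis
  proof (rule that[of x0 "u1 x0 / u2 x0"])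
    show "norm x0 = 1" using x0 by simp
    show "u1 x0 / u2 x0 > 0" "u1 x0 = u1 x0 / u2 x0 * u2 x0" using u0 by simp_all
    show "\<forall>y\<in>sphere 0 1. u1 y \<le> u1 x0 / u2 x0 * u2 y" using max pos2 by (simp add: divide_le_eq)
  qed
qed

lemma esym_ratio_Lam_le_scaled:
  fixes lam1 lam2 :: "nat \<Rightarrow> real"
  assumes G: "in_Gamma k (Idx n P) (Lam lam1)" and le: "\<And>j. j < n \<Longrightarrow> lam1 j \<le> M * lam2 j"
    and M: "M > 0" and lk: "l < k"
  shows "esym k (Idx n P) (Lam lam1) / esym l (Idx n P) (Lam lam1)
    \<le> M ^ (k - l) * (esym k (Idx n P) (Lam lam2) / esym l (Idx n P) (Lam lam2))"
proof -
  have "\<forall>I\<in>Idx n P. Lam lam1 I \<le> M * Lam lam2 I"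
    using le by (auto simp: Lam_def Idx_def sum_distrib_left subset_iff intro!: sum_mono)
  then have "esym k (Idx n P) (Lam lam1) / esym l (Idx n P) (Lam lam1)
      \<le> esym k (Idx n P) (\<lambda>I. M * Lam lam2 I) / esym l (Idx n P) (\<lambda>I. M * Lam lam2 I)"
    by (rule esym_ratio_mono[OF finite_Idx G _ lk])
  also have "\<dots> = M ^ (k - l) * (esym k (Idx n P) (Lam lam2) / esym l (Idx n P) (Lam lam2))"
    using M lk by (simp add: esym_scale power_diff)
  finally show ?thesis .
qed

lemma solution_constant_le:
  fixes n P k l :: nat and p q \<gamma>1 \<gamma>2 :: real and \<phi> u1 u2 :: "'a::euclidean_space \<Rightarrow> real"
  assumes dim: "DIM('a) = n + 1" and lk: "l < k" and pq: "p = q - real l"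
    and \<phi>: "\<forall>x\<in>sphere 0 1. \<phi> x > 0"
    and ad1: "admissible n P k u1" and pos1: "\<forall>x\<in>sphere 0 1. u1 x > 0"
    and so1: "solves n P k l p q \<gamma>1 \<phi> u1"
    and ad2: "admissible n P k u2" and pos2: "\<forall>x\<in>sphere 0 1. u2 x > 0"
    and so2: "solves n P k l p q \<gamma>2 \<phi> u2"
  shows "\<gamma>1 \<le> \<gamma>2"
proof -
  obtain f1 F1 where u1: "sphere_derivs u1 f1 F1"
    using ad1 C2_sphere_imp_sphere_derivs unfolding admissible_def by blast
  obtain f2 F2 where u2: "sphere_derivs u2 f2 F2"
    using ad2 C2_sphere_imp_sphere_derivs unfolding admissible_def by blast
  obtain x0 M where x0: "norm x0 = 1" and M: "M > 0" and eq: "u1 x0 = M * u2 x0"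
    and le: "\<forall>y\<in>sphere 0 1. u1 y \<le> M * u2 y"
    using sphere_max_ratio[OF sphere_derivs_continuous_on[OF u1] sphere_derivs_continuous_on[OF u2] pos1 pos2]
    by blast
  obtain e1 lam1 e2 lam2 where ef1: "eig_frame n u1 x0 e1 lam1" and ef2: "eig_frame n u2 x0 e2 lam2"
    and lam: "\<And>j. j < n \<Longrightarrow> lam1 j \<le> M * lam2 j"
    and grad: "(\<Sum>i<n. (sph_grad u1 x0 (e1 i))\<^sup>2) = M\<^sup>2 * (\<Sum>i<n. (sph_grad u2 x0 (e2 i))\<^sup>2)"
    using touching_point_eigenvalues[OF dim u1 u2 le less_imp_le[OF M] x0 eq] by blast
  define ratio where "ratio lam = esym k (Idx n P) (Lam lam) / esym l (Idx n P) (Lam lam)" for lam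
  have "in_Gamma k (Idx n P) (Lam lam1)" using ad1 x0 ef1 by (auto simp: admissible_def)
  then have ratio_le: "ratio lam1 \<le> M ^ (k - l) * ratio lam2"
    unfolding ratio_def by (rule esym_ratio_Lam_le_scaled[OF _ lam M lk])
  define G where "G = (\<Sum>i<n. (sph_grad u2 x0 (e2 i))\<^sup>2)"
  define R where "R = u2 x0 powr (p - 1) * ((u2 x0)\<^sup>2 + G) powr ((real k + 1 - q) / 2)"
  have u0: "u2 x0 > 0" "G \<ge> 0" using pos2 x0 by (auto simp: G_def sum_nonneg)
  then have "(u2 x0)\<^sup>2 + G > 0" by (simp add: add_pos_nonneg)
  then have R: "R > 0" using u0 by (simp add: R_def)
  have "p - 1 + 2 * ((real k + 1 - q) / 2) = real (k - l)" using pq lk by (simp add: of_nat_diff field_simps)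
  then have "u1 x0 powr (p - 1) * ((u1 x0)\<^sup>2 + (\<Sum>i<n. (sph_grad u1 x0 (e1 i))\<^sup>2)) powr ((real k + 1 - q) / 2)
      = M ^ (k - l) * R"
    using powr_mult_homogeneous[OF M u0, of "p - 1" "(real k + 1 - q) / 2"] M
    by (simp add: eq grad G_def R_def powr_realpow)
  then have "ratio lam1 = M ^ (k - l) * R * \<gamma>1 * \<phi> x0"
    using so1 x0 ef1 by (simp add: solves_def ratio_def)
  moreover have "ratio lam2 = R * \<gamma>2 * \<phi> x0"
    using so2 x0 ef2 by (simp add: solves_def ratio_def G_def R_def)
  ultimately have "M ^ (k - l) * R * \<phi> x0 * \<gamma>1 \<le> M ^ (k - l) * R * \<phi> x0 * \<gamma>2"
    using ratio_le by (simp add: algebra_simps)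
  moreover have "M ^ (k - l) * R * \<phi> x0 > 0" using M R \<phi> x0 by simp
  ultimately show ?thesis by (rule mult_left_le_imp_le)
qed

theorem lemma5p5:
  fixes n P k l :: nat and p q \<gamma>1 \<gamma>2 :: real
    and \<phi> u1 u2 :: "'a::euclidean_space \<Rightarrow> real"
  assumes "n \<ge> 2" and "DIM('a) = n + 1"
    and "1 < P" and "P \<le> n - 1"
    and "l < k" and "k \<le> n choose P"
    and "p = q - real l"
    and "continuous_on (sphere 0 1) \<phi>" and "\<forall>x\<in>sphere 0 1. \<phi> x > 0"
    and "admissible n P k u1" and "\<forall>x\<in>sphere 0 1. u1 x > 0"
    and "solves n P k l p q \<gamma>1 \<phi> u1"
    and "admissible n P k u2" and "\<forall>x\<in>sphere 0 1. u2 x > 0"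
    and "solves n P k l p q \<gamma>2 \<phi> u2"
  shows "\<gamma>1 = \<gamma>2"
proof (rule order_antisym)
  show "\<gamma>1 \<le> \<gamma>2"
    by (rule solution_constant_le[of n l k p q \<phi> P u1 \<gamma>1 u2 \<gamma>2]) (use assms in auto)
  show "\<gamma>2 \<le> \<gamma>1"
    by (rule solution_constant_le[of n l k p q \<phi> P u2 \<gamma>2 u1 \<gamma>1]) (use assms in auto)
qed

end
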